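(* In the FIND setting of the context, fix a leaf cluster $\mathcal C_r$ and a consistent ordering of $\mathcal T_r^+$. If $\mathcal C_i$ and $\mathcal C_j$ are the two children of $\mathcal C_k$ in $\mathcal T_r^+$, then $\boldsymbol\Sigma_k(\mathcal B_i,\mathcal B_j)=\boldsymbol\Sigma(\mathcal B_i,\mathcal B_j)$ and $\boldsymbol\Sigma_k(\mathcal B_j,\mathcal B_i)=\boldsymbol\Sigma(\mathcal B_j,\mathcal B_i)$.
   Context: Setting (FIND). $\mathcal M$ is a finite set of mesh nodes; $\mathbf A$ is an invertible complex matrix indexed by $\mathcal M\times\mathcal M$, structurally symmetric ($A_{ij}\neq0\iff A_{ji}\neq0$); distinct nodes $i,j$ are connected if $A_{ij}\neq 0$. $\boldsymbol\Sigma$ is a complex matrix indexed by $\mathcal M\times\mathcal M$ with $\Sigma_{ij}=0$ whenever $i\neq j$ and $i,j$ are not connected. $\dagger$ is conjugate transpose, $\mathbf X^{-\dagger}=(\mathbf X^{-1})^\dagger$. $\mathbf X(X,Y)$ is the submatrix with rows in $X$, columns in $Y$. For a cluster $\mathcal C\subseteq\mathcal M$: boundary set $\mathcal B_{\mathcal C}=\{i\in\mathcal C: A_{ij}\neq 0\text{ for some } j\notin\mathcal C\}$, inner set $\mathcal I_{\mathcal C}=\mathcal C\setminus\mathcal B_{\mathcal C}$; for $\mathcal C_g$ write $\mathcal B_g,\mathcal I_g$. Cluster tree: $\mathcal T$ is a rooted binary tree of clusters with root $\mathcal M$, each non-leaf cluster the disjoint union of its two children. For a leaf $\mathcal C_r$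 with path $r=a_0,\dots,a_d$ (root) and $b_k$ the sibling of $a_k$, the augmented tree $\mathcal T_r^+$ has root $\mathcal C_{-r}=\mathcal M\setminus\mathcal C_r$; for $0\le k\le d-2$, $\mathcal C_{-a_k}=\mathcal M\setminus\mathcal C_{a_k}$ has children $\mathcal C_{b_k}$ and $\mathcal C_{-a_{k+1}}$, with $\mathcal C_{-a_{d-1}}$ identified with $\mathcal C_{b_{d-1}}$; each basic cluster $\mathcal C_{b_k}$ carries its subtree from $\mathcal T$. Private inner nodes: $\mathcal S_g=\mathcal I_g$ for a leaf $g$ of $\mathcal T_r^+$; $\mathcal S_g=\mathcal I_g\setminus(\mathcal I_i\cup\mathcal I_j)$ if $g$ has children $i,j$. Consistent ordering: a total order $g_1,\dots,g_m$ of the nodes of $\mathcal T_r^+$ with every node after all its descendants. Elimination: $\mathbf A_{g_1}=\mathbf A$, $\boldsymbol\Sigma_{g_1}=\boldsymbol\Sigma$; for each $g$ (with $\mathbf A_g(\mathcal S_g,\mathcal S_g)$ invertible), $\mathcal L_g=\mathbf A_g(\mathcal B_g,\mathcal S_g)\mathbf A_g(\mathcal S_g,\mathcal S_g)^{-1}$, $\mathbf L_g$ is the identity on $\mathcal M$ except $\mathbf L_g(\mathcal B_g,\mathcal S_g)=\mathcal L_g$, $\mathbf A_{g+}=\mathbf L_g^{-1}\mathbf A_g$, $\boldsymbol\Sigma_{g+}=\mathbf L_g^{-1}\boldsymbol\Sigma_g\mathbf L_g^{-\dagger}$, and $\mathbf A_{g_{t+1}}=\mathbf A_{g_t+}$,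 $\boldsymbol\Sigma_{g_{t+1}}=\boldsymbol\Sigma_{g_t+}$. Thus $\boldsymbol\Sigma_k$ is the matrix just before eliminating $\mathcal S_k$. *)

theory Defs
  imports Complex_Main
begin

text \<open>Mesh nodes: the elements of a finite type 'a (the mesh M is UNIV).
  Matrices indexed by M x M are functions 'a => 'a => complex.\<close>

type_synonym 'a cmat = "'a \<Rightarrow> 'a \<Rightarrow> complex"

definition idm :: "'a cmat" where
  "idm = (\<lambda>i j. if i = j then 1 else 0)"

definition mmul :: "'a::finite cmat \<Rightarrow> 'a cmat \<Rightarrow> 'a cmat" where
  "mmul X Y = (\<lambda>i j. \<Sum>k\<in>UNIV. X i k * Y k j)"

definition adj :: "'a cmat \<Rightarrow> 'a cmat" where
  "adj X = (\<lambda>i j. cnj (X j i))"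

definition inverse_on :: "'a set \<Rightarrow> 'a cmat \<Rightarrow> 'a cmat \<Rightarrow> bool" where
  "inverse_on S X Y \<longleftrightarrow>
     (\<forall>i\<in>S. \<forall>j\<in>S. (\<Sum>k\<in>S. X i k * Y k j) = idm i j \<and> (\<Sum>k\<in>S. Y i k * X k j) = idm i j)"

definition invertible_on :: "'a set \<Rightarrow> 'a cmat \<Rightarrow> bool" where
  "invertible_on S X \<longleftrightarrow> (\<exists>Y. inverse_on S X Y)"

definition minv_on :: "'a set \<Rightarrow> 'a cmat \<Rightarrow> 'a cmat" where
  "minv_on S X = (\<lambda>i j. if i \<in> S \<and> j \<in> S then (SOME Y. inverse_on S X Y) i j else 0)"

definition minv :: "'a cmat \<Rightarrow> 'a cmat" where
  "minv X = minv_on UNIV X"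

definition bnd :: "'a cmat \<Rightarrow> 'a set \<Rightarrow> 'a set" where
  "bnd A C = {i \<in> C. \<exists>j. j \<notin> C \<and> A i j \<noteq> 0}"

definition inner :: "'a cmat \<Rightarrow> 'a set \<Rightarrow> 'a set" where
  "inner A C = C - bnd A C"

datatype 'a ctree = Leaf "'a set" | Node "'a ctree" "'a ctree"

fun cl :: "'a ctree \<Rightarrow> 'a set" where
  "cl (Leaf S) = S"
| "cl (Node l r) = cl l \<union> cl r"

fun wf_ctree :: "'a ctree \<Rightarrow> bool" where
  "wf_ctree (Leaf S) = True"
| "wf_ctree (Node l r) = (wf_ctree l \<and> wf_ctree r \<and> cl l \<inter> cl r = {})"

text \<open>Nodes are addressed by paths from the root (False = left, True = right).\<close>
fun sub :: "'a ctree \<Rightarrow> bool list \<Rightarrow> 'a ctree option" where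
  "sub t [] = Some t"
| "sub (Node l r) (b # q) = sub (if b then r else l) q"
| "sub (Leaf S) (b # q) = None"

definition nodes :: "'a ctree \<Rightarrow> bool list set" where
  "nodes t = {q. sub t q \<noteq> None}"

definition clus :: "'a ctree \<Rightarrow> bool list \<Rightarrow> 'a set" where
  "clus t q = cl (the (sub t q))"

text \<open>Augmented tree T_r^+ for the leaf at path p.  Walking down from the root
  along p, acc is the augmented tree of the complement of the current node
  (None at the root).  Going from a_{k+1} to a_k with sibling b_k, the complement
  node -a_k gets children b_k and -a_{k+1}; at the root, -a_{d-1} is b_{d-1}.\<close>
fun aug :: "'a ctree option \<Rightarrow> 'a ctree \<Rightarrow> bool list \<Rightarrow> 'a ctree option" where
  "aug acc t [] = acc"
| "aug acc (Node l r) (x # p) =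
     aug (Some (let b = (if x then l else r) in
                case acc of None \<Rightarrow> b | Some c \<Rightarrow> Node b c))
         (if x then r else l) p"
| "aug acc (Leaf S) (x # p) = None"

definition priv :: "'a cmat \<Rightarrow> 'a ctree \<Rightarrow> bool list \<Rightarrow> 'a set" where
  "priv A U q = (case the (sub U q) of
      Leaf S \<Rightarrow> inner A S
    | Node l r \<Rightarrow> inner A (cl (Node l r)) - (inner A (cl l) \<union> inner A (cl r)))"

definition consistent_ordering :: "'a ctree \<Rightarrow> bool list list \<Rightarrow> bool" where
  "consistent_ordering U ord \<longleftrightarrow> distinct ord \<and> set ord = nodes U \<and>
     (\<forall>s<length ord. \<forall>t<length ord. \<forall>z. z \<noteq> [] \<and> ord ! s = ord ! t @ z \<longrightarrow> s < t)"

text \<open>One elimination step at node q: (A_g, Sigma_g) to (A_{g+}, Sigma_{g+}).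
  Boundary sets are taken w.r.t. the original matrix A0.\<close>
definition elim_step :: "'a::finite cmat \<Rightarrow> 'a ctree \<Rightarrow> bool list \<Rightarrow> 'a cmat \<times> 'a cmat \<Rightarrow> 'a cmat \<times> 'a cmat" where
  "elim_step A0 U q st = (let Ag = fst st; Sg = snd st;
       S = priv A0 U q; B = bnd A0 (clus U q);
       calL = (\<lambda>b s. \<Sum>k\<in>S. Ag b k * minv_on S Ag k s);
       L = (\<lambda>a c. if a \<in> B \<and> c \<in> S then calL a c else idm a c);
       Li = minv L
     in (mmul Li Ag, mmul (mmul Li Sg) (adj Li)))"

text \<open>State (A_{g_{t+1}}, Sigma_{g_{t+1}}) before the (t+1)-th elimination, i.e. after t steps.\<close>
definition elim_state :: "'a::finite cmat \<Rightarrow> 'a cmat \<Rightarrow> 'a ctree \<Rightarrow> bool list list \<Rightarrow> nat \<Rightarrow> 'a cmat \<times> 'a cmat" where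
  "elim_state A0 Sig0 U ord t = foldl (\<lambda>st q. elim_step A0 U q st) (A0, Sig0) (take t ord)"

end

(*
  An elimination step replaces Sigma by L^-1 Sigma (L^-1)^H, where L = L_g, and hence also L^-1,
  differs from the identity only in the block (B_g, S_g), with B_g and S_g disjoint.  Since S_g
  consists of inner nodes of C_g, A vanishes between S_g and the complement of C_g, and so does
  Sigma as long as these entries are untouched; the congruence then changes only entries in
  C_g x C_g.  By laminarity of the cluster tree and the consistent ordering, every cluster
  eliminated before C_k that meets C_k is a proper descendant of C_k, so it lies in C_i or in C_j,
  and no step before C_k touches an entry between C_i and C_j.
*)

theory Submission
  imports Defs "HOL-Library.Sublist"
begin

lemma sum_idm_left [simp]: "(\<Sum>k\<in>UNIV. idm i k * X k j) = (X i j :: complex)"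
  for X :: "'a::finite cmat"
  by (simp add: idm_def if_distrib if_distribR cong: if_cong)

lemma sum_idm_right [simp]: "(\<Sum>k\<in>UNIV. X i k * idm k j) = (X i j :: complex)"
  for X :: "'a::finite cmat"
  by (simp add: idm_def if_distrib if_distribR cong: if_cong)

lemma mmul_idm_left [simp]: "mmul idm X = X"
  by (simp add: mmul_def)

lemma mmul_idm_right [simp]: "mmul X idm = X"
  by (simp add: mmul_def)

lemma mmul_assoc: "mmul (mmul X Y) Z = mmul X (mmul Y Z)"
  by (auto simp: mmul_def sum_distrib_left sum_distrib_right mult.assoc intro!: ext sum.swap)

lemma inverse_on_UNIV_iff: "inverse_on UNIV X Y \<longleftrightarrow> mmul X Y = idm \<and> mmul Y X = idm"
  by (auto simp: inverse_on_def mmul_def fun_eq_iff)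

lemma minv_eqI:
  fixes X Y :: "'a::finite cmat"
  assumes "inverse_on UNIV X Y"
  shows "minv X = Y"
proof -
  define Y' where "Y' = (SOME Y. inverse_on UNIV X Y)"
  have "inverse_on UNIV X Y'"
    unfolding Y'_def using assms by (rule someI[where P = "inverse_on UNIV X"])
  then have "Y' = Y"
    using assms mmul_assoc[of Y' X Y] by (simp add: inverse_on_UNIV_iff)
  then show ?thesis
    by (simp add: minv_def minv_on_def Y'_def)
qed

(* L_g of the elimination step at g is shear B_g S_g calL_g. *)
definition shear :: "'a set \<Rightarrow> 'a set \<Rightarrow> 'a cmat \<Rightarrow> 'a cmat" where
  "shear B S N = (\<lambda>a c. if a \<in> B \<and> c \<in> S then N a c else idm a c)"

lemma shear_eq:
  "B \<inter> S = {} \<Longrightarrow> shear B S N a c = idm a c + (if a \<in> B \<and> c \<in> S then N a c else 0)"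
  by (auto simp: shear_def idm_def)

lemma mmul_shear_left:
  fixes X :: "'a::finite cmat"
  assumes "B \<inter> S = {}"
  shows "mmul (shear B S N) X a c = X a c + (if a \<in> B then \<Sum>w\<in>S. N a w * X w c else 0)"
proof -
  have "mmul (shear B S N) X a c
      = (\<Sum>k\<in>UNIV. idm a k * X k c) + (\<Sum>k\<in>UNIV. (if a \<in> B \<and> k \<in> S then N a k else 0) * X k c)"
    using assms by (simp add: mmul_def shear_eq distrib_right sum.distrib del: sum_idm_left)
  then show ?thesis
    by (cases "a \<in> B") (simp_all add: sum.inter_restrict[symmetric] if_distrib[of "\<lambda>x. x * _"] cong: if_cong)
qed

lemma mmul_adj_shear_right:
  fixes X :: "'a::finite cmat"
  assumes "B \<inter> S = {}"
  shows "mmul X (adj (shear B S N)) a c = X a c + (if c \<in> B then \<Sum>w\<in>S. X a w * cnj (N c w) else 0)"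
proof -
  have "adj (shear B S N) k c = idm k c + (if c \<in> B \<and> k \<in> S then cnj (N c k) else 0)" for k
    using assms by (auto simp: adj_def shear_eq idm_def)
  then have "mmul X (adj (shear B S N)) a c
      = (\<Sum>k\<in>UNIV. X a k * idm k c) + (\<Sum>k\<in>UNIV. X a k * (if c \<in> B \<and> k \<in> S then cnj (N c k) else 0))"
    by (simp add: mmul_def distrib_left sum.distrib del: sum_idm_right)
  then show ?thesis
    by (cases "c \<in> B") (simp_all add: sum.inter_restrict[symmetric] if_distrib[of "\<lambda>x. _ * x"] cong: if_cong)
qed

lemma shear_zero: "B \<inter> S = {} \<Longrightarrow> shear B S (\<lambda>_ _. 0) = idm"
  by (auto simp: shear_def idm_def fun_eq_iff)

lemma shear_mmul_shear:
  fixes N M :: "'a::finite cmat"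
  assumes "B \<inter> S = {}"
  shows "mmul (shear B S N) (shear B S M) = shear B S (\<lambda>a c. N a c + M a c)"
proof (intro ext)
  fix a c
  have "(\<Sum>w\<in>S. N a w * shear B S M w c) = (\<Sum>w\<in>S. if w = c then N a w else 0)"
    using assms by (intro sum.cong) (auto simp: shear_def idm_def)
  then show "mmul (shear B S N) (shear B S M) a c = shear B S (\<lambda>a c. N a c + M a c) a c"
    using assms by (simp add: mmul_shear_left) (auto simp: shear_def idm_def)
qed

lemma minv_shear:
  fixes N :: "'a::finite cmat"
  assumes "B \<inter> S = {}"
  shows "minv (shear B S N) = shear B S (\<lambda>a c. - N a c)"
  using assms by (intro minv_eqI) (simp add: inverse_on_UNIV_iff shear_mmul_shear shear_zero)

lemma shear_congruence_outside:
  fixes X N :: "'a::finite cmat"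
  assumes BS: "B \<inter> S = {}" and "B \<subseteq> C" and "S \<subseteq> C"
    and X_zero: "\<And>s y. s \<in> S \<Longrightarrow> y \<notin> C \<Longrightarrow> X s y = 0 \<and> X y s = 0"
    and "\<not> (x \<in> C \<and> y \<in> C)"
  shows "mmul (mmul (shear B S N) X) (adj (shear B S N)) x y = X x y"
proof (cases "y \<in> C")
  case False
  then have "y \<notin> B" using \<open>B \<subseteq> C\<close> by blast
  then show ?thesis
    using BS X_zero False by (simp add: mmul_adj_shear_right mmul_shear_left)
next
  case True
  then have "x \<notin> C" using assms(5) by blast
  then have "x \<notin> B" using \<open>B \<subseteq> C\<close> by blast
  then show ?thesis
    using BS X_zero \<open>x \<notin> C\<close> by (simp add: mmul_assoc mmul_adj_shear_right mmul_shear_left)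
qed

lemma sub_append: "sub t (q @ z) = (case sub t q of None \<Rightarrow> None | Some t' \<Rightarrow> sub t' z)"
  by (induction t q rule: sub.induct) auto

lemma cl_sub_subset: "sub t q = Some t' \<Longrightarrow> cl t' \<subseteq> cl t"
  by (induction t q arbitrary: t' rule: sub.induct) (auto split: if_splits)

lemma wf_ctree_sub: "wf_ctree t \<Longrightarrow> sub t q = Some t' \<Longrightarrow> wf_ctree t'"
  by (induction t q arbitrary: t' rule: sub.induct) (auto split: if_splits)

lemma sub_laminar:
  "wf_ctree t \<Longrightarrow> sub t q1 = Some t1 \<Longrightarrow> sub t q2 = Some t2 \<Longrightarrow> cl t1 \<inter> cl t2 \<noteq> {}
   \<Longrightarrow> prefix q1 q2 \<or> prefix q2 q1"
proof (induction t q1 arbitrary: q2 rule: sub.induct)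
  case (2 l r b q)
  show ?case
  proof (cases q2)
    case (Cons b' q')
    have "cl t1 \<subseteq> cl (if b then r else l)" "cl t2 \<subseteq> cl (if b' then r else l)"
      using "2.prems" Cons cl_sub_subset[of "if b then r else l" q t1]
        cl_sub_subset[of "if b' then r else l" q' t2] by auto
    then have "b = b'"
      using "2.prems" by (cases b; cases b') auto
    then show ?thesis
      using "2.IH" "2.prems" Cons by auto
  qed simp
qed auto

lemma wf_ctree_aug:
  "wf_ctree t \<Longrightarrow> (case acc of None \<Rightarrow> True | Some c \<Rightarrow> wf_ctree c \<and> cl c \<inter> cl t = {})
   \<Longrightarrow> aug acc t p = Some U \<Longrightarrow> wf_ctree U"
  by (induction acc t p rule: aug.induct) (auto simp: Let_def split: option.splits if_splits)

lemma clus_prefix_subset: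
  assumes "q' \<in> nodes U" and "prefix q q'"
  shows "clus U q' \<subseteq> clus U q"
proof -
  obtain z where z: "q' = q @ z" using assms(2) by (auto elim: prefixE)
  then obtain t where "sub U q = Some t" and "sub t z = Some (the (sub U q'))"
    using assms(1) by (auto simp: nodes_def sub_append split: option.splits)
  then show ?thesis
    by (auto simp: clus_def dest: cl_sub_subset)
qed

lemma clus_strict_descendant_child:
  assumes "sub U k = Some (Node l r)" and "q \<in> nodes U" and "strict_prefix k q"
  shows "clus U q \<subseteq> cl l \<or> clus U q \<subseteq> cl r"
proof -
  obtain b z where "q = k @ b # z" using assms(3) by (auto elim: strict_prefixE')
  then have "sub (if b then r else l) z = Some (the (sub U q))"
    using assms(1,2) by (auto simp: nodes_def sub_append)
  then show ?thesis
    using cl_sub_subset by (cases b) (auto simp: clus_def)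
qed

lemma consistent_ordering_nodes:
  "consistent_ordering U ord \<Longrightarrow> t < length ord \<Longrightarrow> ord ! t \<in> nodes U"
  by (auto simp: consistent_ordering_def)

lemma consistent_ordering_prefix_le:
  assumes "consistent_ordering U ord" and "s < length ord" and "t < length ord"
    and "prefix (ord ! t) (ord ! s)"
  shows "s \<le> t"
proof -
  obtain z where z: "ord ! s = ord ! t @ z" using assms(4) by (auto elim: prefixE)
  show ?thesis
  proof (cases "z = []")
    case True
    then show ?thesis
      using assms z by (simp add: consistent_ordering_def nth_eq_iff_index_eq)
  next
    case False
    then have "s < t"
      using assms(1-3) z unfolding consistent_ordering_def by blast
    then show ?thesis
      by simp
  qed
qed

lemma consistent_ordering_earlier_cluster:
  assumes "wf_ctree U" and "consistent_ordering U ord" and "u < t" and "t < length ord"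
    and "clus U (ord ! u) \<inter> clus U (ord ! t) \<noteq> {}"
  shows "strict_prefix (ord ! t) (ord ! u)"
proof -
  have nodes: "ord ! u \<in> nodes U" "ord ! t \<in> nodes U"
    using assms(2-4) by (auto intro: consistent_ordering_nodes)
  then obtain tu tt where "sub U (ord ! u) = Some tu" and "sub U (ord ! t) = Some tt"
    by (auto simp: nodes_def)
  then have "prefix (ord ! u) (ord ! t) \<or> prefix (ord ! t) (ord ! u)"
    using sub_laminar[OF assms(1)] assms(5) by (simp add: clus_def)
  moreover have "\<not> prefix (ord ! u) (ord ! t)"
  proof
    assume "prefix (ord ! u) (ord ! t)"
    then have "t \<le> u"
      using consistent_ordering_prefix_le[OF assms(2), of t u] assms(3,4) by linarith
    then show False
      using assms(3) by simp
  qed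
  moreover have "ord ! u \<noteq> ord ! t"
    using assms(2-4) by (simp add: consistent_ordering_def nth_eq_iff_index_eq)
  ultimately show ?thesis
    by (auto intro: strict_prefixI)
qed

lemma priv_subset_inner: "priv A U q \<subseteq> inner A (clus U q)"
  by (cases "the (sub U q)") (auto simp: priv_def clus_def)

lemma sparse_vanishes_inner_outside:
  assumes A_sym: "\<forall>i j. A i j \<noteq> 0 \<longleftrightarrow> A j i \<noteq> 0"
    and Sig_sparse: "\<forall>i j. i \<noteq> j \<and> A i j = 0 \<longrightarrow> Sig i j = 0"
    and "s \<in> inner A C" and "y \<notin> C"
  shows "Sig s y = 0 \<and> Sig y s = 0"
proof -
  have "s \<in> C" and "A s y = 0"
    using assms(3,4) by (auto simp: inner_def bnd_def)
  moreover have "A y s = 0"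
    using A_sym \<open>A s y = 0\<close> by blast
  ultimately show ?thesis
    using Sig_sparse assms(4) by metis
qed

lemma elim_step_Sigma_outside:
  fixes st :: "'a::finite cmat \<times> 'a cmat"
  assumes "\<And>s y. s \<in> priv A0 U q \<Longrightarrow> y \<notin> clus U q \<Longrightarrow> snd st s y = 0 \<and> snd st y s = 0"
    and "\<not> (x \<in> clus U q \<and> y \<in> clus U q)"
  shows "snd (elim_step A0 U q st) x y = snd st x y"
proof -
  define S B where "S = priv A0 U q" and "B = bnd A0 (clus U q)"
  define calL where "calL = (\<lambda>b s. \<Sum>k\<in>S. fst st b k * minv_on S (fst st) k s)"
  have "B \<inter> S = {}" "B \<subseteq> clus U q" "S \<subseteq> clus U q"
    using priv_subset_inner[of A0 U q] by (auto simp: S_def B_def inner_def bnd_def)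
  moreover have "snd (elim_step A0 U q st)
      = mmul (mmul (minv (shear B S calL)) (snd st)) (adj (minv (shear B S calL)))"
    by (simp add: elim_step_def Let_def S_def B_def calL_def shear_def)
  ultimately show ?thesis
    using assms by (simp add: S_def minv_shear shear_congruence_outside)
qed

lemma elim_state_0: "elim_state A Sig U ord 0 = (A, Sig)"
  by (simp add: elim_state_def)

lemma elim_state_Suc:
  "t < length ord \<Longrightarrow>
   elim_state A Sig U ord (Suc t) = elim_step A U (ord ! t) (elim_state A Sig U ord t)"
  by (simp add: elim_state_def take_Suc_conv_app_nth)

lemma elim_state_Sigma_unchanged:
  assumes A_sym: "\<forall>i j. A i j \<noteq> 0 \<longleftrightarrow> A j i \<noteq> 0"
    and Sig_sparse: "\<forall>i j. i \<noteq> j \<and> A i j = 0 \<longrightarrow> Sig i j = 0"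
    and U_wf: "wf_ctree U" and ord_cons: "consistent_ordering U ord"
  shows "t \<le> length ord \<Longrightarrow> (\<And>u. u < t \<Longrightarrow> \<not> (x \<in> clus U (ord ! u) \<and> y \<in> clus U (ord ! u)))
    \<Longrightarrow> snd (elim_state A Sig U ord t) x y = Sig x y"
proof (induction t arbitrary: x y)
  case 0
  then show ?case
    by (simp add: elim_state_0)
next
  case (Suc t)
  define C where "C = clus U (ord ! t)"
  have "snd (elim_state A Sig U ord t) s z = 0 \<and> snd (elim_state A Sig U ord t) z s = 0"
    if s: "s \<in> priv A U (ord ! t)" and z: "z \<notin> C" for s z
  proof -
    have "s \<in> inner A C"
      unfolding C_def by (rule subsetD[OF priv_subset_inner s])
    have separated: "\<not> (s \<in> clus U (ord ! u) \<and> z \<in> clus U (ord ! u))" if "u < t" for u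
    proof
      assume both: "s \<in> clus U (ord ! u) \<and> z \<in> clus U (ord ! u)"
      then have "strict_prefix (ord ! t) (ord ! u)"
        using consistent_ordering_earlier_cluster[OF U_wf ord_cons that] Suc.prems(1)
          \<open>s \<in> inner A C\<close> by (auto simp: C_def inner_def)
      moreover have "ord ! u \<in> nodes U"
        using consistent_ordering_nodes[OF ord_cons] that Suc.prems(1) by simp
      ultimately have "clus U (ord ! u) \<subseteq> C"
        unfolding C_def by (metis clus_prefix_subset prefix_order.less_imp_le)
      then show False
        using both z by auto
    qed
    have "snd (elim_state A Sig U ord t) s z = Sig s z" "snd (elim_state A Sig U ord t) z s = Sig z s"
      using Suc.IH[of s z] Suc.IH[of z s] separated Suc.prems(1) by auto
    then show ?thesis
      using sparse_vanishes_inner_outside[OF A_sym Sig_sparse \<open>s \<in> inner A C\<close> z] by simp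
  qed
  then have "snd (elim_state A Sig U ord (Suc t)) x y = snd (elim_state A Sig U ord t) x y"
    using Suc.prems by (auto simp: elim_state_Suc C_def intro!: elim_step_Sigma_outside)
  also have "\<dots> = Sig x y"
    using Suc by auto
  finally show ?case .
qed

lemma earlier_cluster_not_across_children:
  assumes U_wf: "wf_ctree U" and ord_cons: "consistent_ordering U ord"
    and "t < length ord" and k: "sub U (ord ! t) = Some (Node l r)" and "u < t"
    and "x \<in> cl l" and "y \<in> cl r"
  shows "\<not> (x \<in> clus U (ord ! u) \<and> y \<in> clus U (ord ! u))"
proof
  assume both: "x \<in> clus U (ord ! u) \<and> y \<in> clus U (ord ! u)"
  then have "strict_prefix (ord ! t) (ord ! u)"
    using consistent_ordering_earlier_cluster[OF U_wf ord_cons \<open>u < t\<close> \<open>t < length ord\<close>]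
      \<open>x \<in> cl l\<close> k by (auto simp: clus_def)
  then have "clus U (ord ! u) \<subseteq> cl l \<or> clus U (ord ! u) \<subseteq> cl r"
    using clus_strict_descendant_child[OF k] consistent_ordering_nodes[OF ord_cons]
      \<open>u < t\<close> \<open>t < length ord\<close> by simp
  moreover have "cl l \<inter> cl r = {}"
    using wf_ctree_sub[OF U_wf k] by simp
  ultimately show False
    using both \<open>x \<in> cl l\<close> \<open>y \<in> cl r\<close> by blast
qed

theorem corollary1:
  fixes A Sig :: "'a::finite \<Rightarrow> 'a \<Rightarrow> complex"
    and T U :: "'a ctree" and p k :: "bool list" and ord :: "bool list list"
  assumes A_inv: "invertible_on UNIV A"
    and A_sym: "\<forall>i j. A i j \<noteq> 0 \<longleftrightarrow> A j i \<noteq> 0"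
    and Sig_sparse: "\<forall>i j. i \<noteq> j \<and> A i j = 0 \<longrightarrow> Sig i j = 0"
    and T_wf: "wf_ctree T" and T_root: "cl T = UNIV"
    and r_leaf: "\<exists>S. sub T p = Some (Leaf S)" and p_nonroot: "p \<noteq> []"
    and U_def: "aug None T p = Some U"
    and ord_cons: "consistent_ordering U ord"
    and piv_inv: "\<forall>t<length ord. invertible_on (priv A U (ord ! t)) (fst (elim_state A Sig U ord t))"
    and k_node: "\<exists>l r. sub U k = Some (Node l r)"
  shows "\<forall>t<length ord. ord ! t = k \<longrightarrow>
           (\<forall>a\<in>bnd A (clus U (k @ [False])). \<forall>b\<in>bnd A (clus U (k @ [True])).
              snd (elim_state A Sig U ord t) a b = Sig a b \<and>
              snd (elim_state A Sig U ord t) b a = Sig b a)"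
proof (intro allI impI ballI)
  fix t a b
  assume t: "t < length ord" "ord ! t = k"
    and a: "a \<in> bnd A (clus U (k @ [False]))" and b: "b \<in> bnd A (clus U (k @ [True]))"
  obtain l r where k: "sub U (ord ! t) = Some (Node l r)"
    using k_node t(2) by blast
  have U_wf: "wf_ctree U"
    using wf_ctree_aug[OF T_wf _ U_def] by simp
  have "a \<in> cl l" "b \<in> cl r"
    using a b k t(2) by (auto simp: bnd_def clus_def sub_append)
  then have "\<not> (a \<in> clus U (ord ! u) \<and> b \<in> clus U (ord ! u))"
    and "\<not> (b \<in> clus U (ord ! u) \<and> a \<in> clus U (ord ! u))" if "u < t" for u
    using earlier_cluster_not_across_children[OF U_wf ord_cons t(1) k that] by auto
  then show "snd (elim_state A Sig U ord t) a b = Sig a b \<and> snd (elim_state A Sig U ord t) b a = Sig b a"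
    using elim_state_Sigma_unchanged[OF A_sym Sig_sparse U_wf ord_cons] t(1) by simp
qed

end
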